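(* Let $\psi:[0,\infty)\to[0,\infty)$ be convex, nondecreasing, not identically zero, with $\psi(0)=0$; let $\Psi=e^{\psi}-1$ and, for $L>0$, $\Psi(z;L)=\exp\big(\frac{2}{L^2}\psi(Lz)\big)-1$. Let $Z_1,\dots,Z_m$ be random variables with $\tau\equiv\max_{1\le j\le m}\|Z_j\|_{\Psi}<\infty$. Then $$\Big\|\Big(\max_{1\le j\le m}|Z_j|-\tau\,\Psi^{-1}(m)\Big)_+\Big\|_{\Psi(\cdot;\sqrt6)}\le\sqrt6\,\tau.$$
   Context: For $y>0$, $\Psi^{-1}(y)$ is the unique $x\ge0$ with $\Psi(x)=y$ (so $\Psi^{-1}(m)=\psi^{-1}(\log(1+m))$). The Orlicz norm is $\|X\|_{\Psi}=\inf\{c>0:E\Psi(|X|/c)\le1\}$; $(a)_+=\max(a,0)$. *)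

theory Defs
  imports "HOL-Probability.Probability"
begin

definition Psi_fun :: "(real \<Rightarrow> real) \<Rightarrow> real \<Rightarrow> real" where
  "Psi_fun psi x = exp (psi x) - 1"

definition Psi_L :: "(real \<Rightarrow> real) \<Rightarrow> real \<Rightarrow> real \<Rightarrow> real" where
  "Psi_L psi L z = exp ((2 / L^2) * psi (L * z)) - 1"

definition Psi_inv :: "(real \<Rightarrow> real) \<Rightarrow> real \<Rightarrow> real" where
  "Psi_inv psi y = (THE x. x \<ge> 0 \<and> Psi_fun psi x = y)"

text \<open>Orlicz norm, extended-real valued (infimum of the empty set is infinity).
  The expectation of the nonnegative variable is taken as a nonnegative integral.\<close>
definition orlicz_norm :: "'a measure \<Rightarrow> (real \<Rightarrow> real) \<Rightarrow> ('a \<Rightarrow> real) \<Rightarrow> ereal" where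
  "orlicz_norm M Phi X =
     Inf (ereal ` {c. c > 0 \<and> (\<integral>\<^sup>+ x. ennreal (Phi (\<bar>X x\<bar> / c)) \<partial>M) \<le> 1})"

end

theory Submission
  imports Defs
begin

text \<open>Write \<open>t = \<tau>\<close>, \<open>u = \<Psi>\<^sup>-\<^sup>1(m)\<close>, so that \<open>\<psi> u = ln (1 + m)\<close>, and \<open>S = max\<^sub>j \<bar>Z\<^sub>j\<bar>\<close>.
  A convex \<open>\<psi>\<close> with \<open>\<psi> 0 = 0\<close> is superadditive, so \<open>\<psi> ((S - t u) / t) \<le> \<psi> (S / t) - ln (1 + m)\<close>
  when \<open>S > t u\<close>. Together with \<open>exp (s / 3) - 1 \<le> (exp s - 1) / 3\<close> this bounds
  \<open>\<Psi>((S - t u)\<^sub>+ / (\<surd>6 t); \<surd>6)\<close> pointwise by \<open>\<Sum>\<^sub>j exp (\<psi> (\<bar>Z\<^sub>j\<bar> / t)) / (3 (m + 1))\<close>, whose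
  expectation is at most \<open>2 m / (3 (m + 1)) \<le> 1\<close> since \<open>E \<Psi>(\<bar>Z\<^sub>j\<bar> / t) \<le> 1\<close>. When \<open>\<tau> = 0\<close> there
  is no shift; instead \<open>\<Psi>(x / m) \<le> \<Psi>(x) / m\<close> bounds \<open>\<Psi>(S / s)\<close> by the average of the
  \<open>\<Psi>(m \<bar>Z\<^sub>j\<bar> / s)\<close>, for every \<open>s > 0\<close>.\<close>

lemma convex_on_zero_le_ratio:
  fixes f :: "real \<Rightarrow> real"
  assumes "convex_on {0..} f" "f 0 = 0" "0 \<le> x" "x \<le> y" "0 < y"
  shows "f x \<le> (x / y) * f y"
proof -
  have "f ((1 - x / y) *\<^sub>R 0 + (x / y) *\<^sub>R y) \<le> (1 - x / y) * f 0 + (x / y) * f y"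
    by (rule convex_onD[OF assms(1)]) (use assms in auto)
  then show ?thesis using assms by simp
qed

lemma convex_on_zero_superadditive:
  fixes f :: "real \<Rightarrow> real"
  assumes cv: "convex_on {0..} f" and f0: "f 0 = 0" and "0 \<le> a" "0 \<le> b"
  shows "f a + f b \<le> f (a + b)"
proof (cases "a + b = 0")
  case True
  then have "a = 0" "b = 0" using assms by auto
  then show ?thesis using f0 by simp
next
  case False
  then have pos: "a + b > 0" using assms by auto
  have "f a + f b \<le> (a / (a + b)) * f (a + b) + (b / (a + b)) * f (a + b)"
    using convex_on_zero_le_ratio[OF cv f0, of a "a + b"] convex_on_zero_le_ratio[OF cv f0, of b "a + b"]
      assms pos by auto
  also have "\<dots> = f (a + b)"
    using pos by (simp add: add_divide_distrib[symmetric] distrib_right[symmetric])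
  finally show ?thesis .
qed

lemma convex_on_zero_eq_imp_eq:
  fixes f :: "real \<Rightarrow> real"
  assumes cv: "convex_on {0..} f" and f0: "f 0 = 0"
    and "0 \<le> x" "0 \<le> y" "f x = f y" "f y > 0"
  shows "x = y"
proof -
  have "\<not> a < b" if "0 \<le> a" "f a = f b" "f b > 0" for a b
  proof
    assume "a < b"
    then have "f a \<le> (a / b) * f b" using that by (intro convex_on_zero_le_ratio[OF cv f0]) auto
    also have "\<dots> < 1 * f b" using \<open>a < b\<close> that by (intro mult_strict_right_mono) auto
    finally show False using that by simp
  qed
  then show ?thesis using assms by (metis linorder_neqE_linordered_idom)
qed

lemma continuous_on_convex_on_nonneg:
  fixes f :: "real \<Rightarrow> real"
  assumes "convex_on {0..} f"
  shows "continuous_on {0<..} f"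
  by (rule convex_on_continuous[OF open_greaterThan convex_on_subset[OF assms]]) auto

text \<open>Convexity makes \<open>f\<close> continuous on \<open>(0, \<infinity>)\<close> only; the intermediate value theorem is
  therefore applied on an interval \<open>[a, b]\<close> with \<open>a > 0\<close>.\<close>

lemma convex_on_zero_attains:
  fixes f :: "real \<Rightarrow> real"
  assumes cv: "convex_on {0..} f" and f0: "f 0 = 0" and nn: "\<forall>x\<ge>0. f x \<ge> 0"
    and nz: "\<exists>x\<ge>0. f x \<noteq> 0" and L: "L > 0"
  shows "\<exists>u>0. f u = L"
proof -
  obtain x where x: "x \<ge> 0" "f x \<noteq> 0" using nz by auto
  have fx: "f x > 0" using x nn by force
  have xpos: "x > 0" using x f0 by (cases "x = 0") auto
  define a where "a = x * min 1 (L / f x)"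
  define b where "b = x * max 1 (L / f x)"
  have a: "0 < a" "a \<le> x" unfolding a_def using xpos fx L by (auto simp: mult_left_le)
  have b: "x \<le> b" unfolding b_def using xpos by (simp add: mult_le_cancel_left1)
  have "f a \<le> (a / x) * f x" by (rule convex_on_zero_le_ratio[OF cv f0]) (use a xpos in auto)
  also have "\<dots> \<le> L" unfolding a_def using xpos fx by (auto simp: min_def field_simps)
  finally have fa: "f a \<le> L" .
  have "f x \<le> (x / b) * f b" by (rule convex_on_zero_le_ratio[OF cv f0]) (use b xpos in auto)
  then have "L \<le> f b"
    unfolding b_def using xpos fx by (auto simp: max_def field_simps split: if_splits)
  moreover have "continuous_on {a..b} f"
    by (rule continuous_on_subset[OF continuous_on_convex_on_nonneg[OF cv]]) (use a in auto)
  ultimately obtain u where "a \<le> u" "u \<le> b" "f u = L"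
    using IVT'[of f a L b] fa a b by auto
  then show ?thesis using a by (intro exI[of _ u]) auto
qed

lemma Psi_inv_spec:
  fixes psi :: "real \<Rightarrow> real"
  assumes cv: "convex_on {0..} psi" and p0: "psi 0 = 0" and nn: "\<forall>x\<ge>0. psi x \<ge> 0"
    and nz: "\<exists>x\<ge>0. psi x \<noteq> 0" and y: "y > 0"
  shows "Psi_inv psi y \<ge> 0" "psi (Psi_inv psi y) = ln (1 + y)"
proof -
  have Psi_eq_iff: "Psi_fun psi x = y \<longleftrightarrow> psi x = ln (1 + y)" for x
    using y by (auto simp: Psi_fun_def)
  obtain u where u: "u > 0" "psi u = ln (1 + y)"
    using convex_on_zero_attains[OF cv p0 nn nz, of "ln (1 + y)"] y by auto
  have "\<exists>!x. x \<ge> 0 \<and> Psi_fun psi x = y"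
    using u y convex_on_zero_eq_imp_eq[OF cv p0, of _ u] by (intro ex1I[of _ u]) (auto simp: Psi_eq_iff)
  from theI'[OF this] show "Psi_inv psi y \<ge> 0" "psi (Psi_inv psi y) = ln (1 + y)"
    unfolding Psi_inv_def Psi_eq_iff by auto
qed

lemma exp_divide_minus_one_le:
  fixes s k :: real
  assumes "1 \<le> k"
  shows "exp (s / k) - 1 \<le> (exp s - 1) / k"
proof -
  have "exp ((1 - 1 / k) *\<^sub>R 0 + (1 / k) *\<^sub>R s) \<le> (1 - 1 / k) * exp 0 + (1 / k) * exp s"
    by (rule convex_onD[OF exp_convex]) (use assms in auto)
  then show ?thesis using assms by (simp add: field_simps)
qed

lemma Psi_fun_divide_le:
  fixes psi :: "real \<Rightarrow> real"
  assumes cv: "convex_on {0..} psi" and p0: "psi 0 = 0" and a: "a \<ge> 0" and k: "k \<ge> 1"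
  shows "Psi_fun psi (a / k) \<le> Psi_fun psi a / k"
proof (cases "a = 0")
  case True
  then show ?thesis using p0 by (simp add: Psi_fun_def)
next
  case False
  have "psi (a / k) \<le> ((a / k) / a) * psi a"
    by (rule convex_on_zero_le_ratio[OF cv p0]) (use a k False in \<open>auto simp: divide_le_eq\<close>)
  then have "exp (psi (a / k)) - 1 \<le> exp (psi a / k) - 1" using False by simp
  also have "\<dots> \<le> (exp (psi a) - 1) / k" by (rule exp_divide_minus_one_le[OF k])
  finally show ?thesis by (simp add: Psi_fun_def)
qed

lemma Psi_L_sqrt6: "Psi_L psi (sqrt 6) (a / (sqrt 6 * t)) = exp (psi (a / t) / 3) - 1"
proof -
  have "sqrt 6 * (a / (sqrt 6 * t)) = a / t" by simp
  moreover have "2 / (sqrt 6)\<^sup>2 = (1 / 3 :: real)" by simp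
  ultimately show ?thesis unfolding Psi_L_def by simp
qed

lemma mono_on_Psi_fun: "mono_on {0..} psi \<Longrightarrow> mono_on {0..} (Psi_fun psi)"
  unfolding Psi_fun_def by (auto simp: mono_on_def)

lemma continuous_on_Psi_fun:
  "convex_on {0..} psi \<Longrightarrow> continuous_on {0<..} (Psi_fun psi)"
  unfolding Psi_fun_def by (intro continuous_intros continuous_on_convex_on_nonneg)

lemma orlicz_norm_nonneg: "orlicz_norm M Phi X \<ge> 0"
  unfolding orlicz_norm_def by (rule Inf_greatest) auto

lemma orlicz_norm_le:
  assumes "c > 0" "(\<integral>\<^sup>+ x. ennreal (Phi (\<bar>X x\<bar> / c)) \<partial>M) \<le> 1"
  shows "orlicz_norm M Phi X \<le> ereal c"
  unfolding orlicz_norm_def using assms by (intro Inf_lower) auto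

lemma borel_measurable_orlicz_integrand:
  fixes Phi :: "real \<Rightarrow> real"
  assumes mono: "mono_on {0..} Phi" and X: "X \<in> borel_measurable M" and c: "0 \<le> c"
  shows "(\<lambda>x. ennreal (Phi (\<bar>X x\<bar> / c))) \<in> borel_measurable M"
proof -
  have "mono (\<lambda>y. Phi (max 0 y))"
    by (auto simp: mono_def intro!: mono_onD[OF mono])
  then have "(\<lambda>y. Phi (max 0 y)) \<in> borel_measurable borel" by (rule borel_measurable_mono)
  then have "(\<lambda>x. Phi (max 0 (\<bar>X x\<bar> / c))) \<in> borel_measurable M"
    using X by measurable
  moreover have "max 0 (\<bar>X x\<bar> / c) = \<bar>X x\<bar> / c" for x using c by simp
  ultimately show ?thesis by simp
qed

lemma nn_integral_orlicz_le_of_less: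
  fixes Phi :: "real \<Rightarrow> real"
  assumes mono: "mono_on {0..} Phi" and less: "orlicz_norm M Phi X < ereal t"
  shows "(\<integral>\<^sup>+ x. ennreal (Phi (\<bar>X x\<bar> / t)) \<partial>M) \<le> 1"
proof -
  from less obtain c where c: "c > 0" "c < t" "(\<integral>\<^sup>+ x. ennreal (Phi (\<bar>X x\<bar> / c)) \<partial>M) \<le> 1"
    unfolding orlicz_norm_def Inf_less_iff by auto
  have "(\<integral>\<^sup>+ x. ennreal (Phi (\<bar>X x\<bar> / t)) \<partial>M) \<le> (\<integral>\<^sup>+ x. ennreal (Phi (\<bar>X x\<bar> / c)) \<partial>M)"
    using c by (intro nn_integral_mono ennreal_leI mono_onD[OF mono]) (auto simp: frac_le)
  with c show ?thesis by simp
qed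

text \<open>The infimum in the Orlicz norm is attained: approximate \<open>t\<close> from above and pass to the
  limit by monotone convergence, using continuity of \<open>\<Phi>\<close> at the positive points \<open>|X x| / t\<close>.\<close>

lemma nn_integral_orlicz_le:
  fixes Phi :: "real \<Rightarrow> real"
  assumes mono: "mono_on {0..} Phi" and cont: "continuous_on {0<..} Phi"
    and X: "X \<in> borel_measurable M" and le: "orlicz_norm M Phi X \<le> ereal t" and t: "t > 0"
  shows "(\<integral>\<^sup>+ x. ennreal (Phi (\<bar>X x\<bar> / t)) \<partial>M) \<le> 1"
proof -
  define f where "f n x = ennreal (Phi (\<bar>X x\<bar> / (t + 1 / Suc n)))" for n x
  have "\<bar>X x\<bar> / (t + 1 / Suc n) \<le> \<bar>X x\<bar> / (t + 1 / Suc (Suc n))" for n x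
    using t by (intro divide_left_mono add_left_mono) (auto simp: frac_le intro!: mult_pos_pos add_pos_pos)
  then have inc: "incseq f"
    unfolding f_def using t
    by (intro incseq_SucI le_funI ennreal_leI mono_onD[OF mono]) (auto intro!: add_pos_pos)
  have lim: "(\<lambda>n. f n x) \<longlonglongrightarrow> ennreal (Phi (\<bar>X x\<bar> / t))" for x
  proof (cases "X x = 0")
    case False
    have "isCont Phi (\<bar>X x\<bar> / t)"
      using cont False t by (simp add: continuous_on_eq_continuous_at)
    moreover have "(\<lambda>n. \<bar>X x\<bar> / (t + 1 / Suc n)) \<longlonglongrightarrow> \<bar>X x\<bar> / (t + 0)"
      using t by (intro tendsto_intros LIMSEQ_Suc[OF lim_1_over_n]) auto
    ultimately show ?thesis
      unfolding f_def by (intro tendsto_ennrealI) (use isCont_tendsto_compose in fastforce)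
  qed (simp add: f_def)
  have "(\<integral>\<^sup>+ x. ennreal (Phi (\<bar>X x\<bar> / t)) \<partial>M) = (\<integral>\<^sup>+ x. (SUP n. f n x) \<partial>M)"
    using inc lim by (intro nn_integral_cong LIMSEQ_unique[OF _ LIMSEQ_SUP])
      (auto simp: incseq_def le_fun_def)
  also have "\<dots> = (SUP n. integral\<^sup>N M (f n))"
  proof (rule nn_integral_monotone_convergence_SUP[OF inc])
    show "f n \<in> borel_measurable M" for n
      unfolding f_def using t by (intro borel_measurable_orlicz_integrand[OF mono X]) auto
  qed
  also have "\<dots> \<le> 1"
    unfolding f_def using t
    by (intro SUP_least nn_integral_orlicz_le_of_less[OF mono] le_less_trans[OF le]) auto
  finally show ?thesis .
qed

lemma (in prob_space) nn_integral_le_of_sum_bound: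
  fixes p :: "'i \<Rightarrow> 'a \<Rightarrow> real" and F :: "'a \<Rightarrow> real" and b c :: real
  assumes fin: "finite J"
    and meas: "\<And>j. j \<in> J \<Longrightarrow> (\<lambda>x. ennreal (p j x)) \<in> borel_measurable M"
    and int: "\<And>j. j \<in> J \<Longrightarrow> (\<integral>\<^sup>+ x. ennreal (p j x) \<partial>M) \<le> 1"
    and p: "\<And>j x. j \<in> J \<Longrightarrow> p j x \<ge> 0" and c: "c \<ge> 0" and b: "b \<ge> 0"
    and F: "\<And>x. F x \<le> c * (\<Sum>j\<in>J. p j x + b)"
  shows "(\<integral>\<^sup>+ x. ennreal (F x) \<partial>M) \<le> ennreal (c * (real (card J) * (1 + b)))"
proof -
  have "ennreal (F x) \<le> ennreal c * (\<Sum>j\<in>J. ennreal (p j x) + ennreal b)" for x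
    using F[of x] p b c
    by (simp add: ennreal_mult'[symmetric] ennreal_plus[symmetric] ennreal_leI
        del: ennreal_plus)
  then have "(\<integral>\<^sup>+ x. ennreal (F x) \<partial>M)
      \<le> (\<integral>\<^sup>+ x. ennreal c * (\<Sum>j\<in>J. ennreal (p j x) + ennreal b) \<partial>M)"
    by (intro nn_integral_mono)
  also have "\<dots> = ennreal c * (\<Sum>j\<in>J. (\<integral>\<^sup>+ x. ennreal (p j x) \<partial>M) + ennreal b)"
    using meas by (simp add: nn_integral_cmult nn_integral_sum nn_integral_add emeasure_space_1)
  also have "\<dots> \<le> ennreal c * (\<Sum>j\<in>J. 1 + ennreal b)"
    by (intro mult_left_mono sum_mono add_right_mono int) auto
  also have "\<dots> = ennreal (c * (real (card J) * (1 + b)))"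
    using b c by (simp add: ennreal_mult' ennreal_of_nat_eq_real_of_nat)
  finally show ?thesis .
qed

lemma Max_image_attained:
  fixes f :: "'i \<Rightarrow> 'b::linorder"
  assumes "finite J" "J \<noteq> {}"
  obtains k where "k \<in> J" "(MAX j\<in>J. f j) = f k"
proof -
  have "(MAX j\<in>J. f j) \<in> f ` J" using assms by (intro Max_in) auto
  then show ?thesis using that by auto
qed

lemma exp_psi_shifted_max_le:
  fixes psi :: "real \<Rightarrow> real" and v :: "'i \<Rightarrow> real"
  assumes cv: "convex_on {0..} psi" and p0: "psi 0 = 0" and nn: "\<forall>x\<ge>0. psi x \<ge> 0"
    and t: "t > 0" and u: "u \<ge> 0" "psi u = ln (1 + real (card J))"
    and fin: "finite J" and k: "k \<in> J" and v: "\<And>j. j \<in> J \<Longrightarrow> v j \<ge> 0"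
  shows "exp (psi (max 0 (v k - t * u) / t) / 3) - 1
          \<le> (1 / (3 * (real (card J) + 1))) * (\<Sum>j\<in>J. Psi_fun psi (v j / t) + 1)"
proof -
  define w where "w = max 0 (v k - t * u) / t"
  have w: "w \<ge> 0" unfolding w_def using t by simp
  have shift: "exp (psi w) - 1 \<le> exp (psi (v k / t)) / (1 + real (card J))"
  proof (cases "v k \<le> t * u")
    case True
    then show ?thesis using p0 t by (simp add: w_def add_pos_nonneg)
  next
    case False
    then have "w + u = v k / t" using t by (simp add: w_def field_simps)
    then have "psi w \<le> psi (v k / t) - ln (1 + real (card J))"
      using convex_on_zero_superadditive[OF cv p0 w u(1)] u by simp
    then have "exp (psi w) \<le> exp (psi (v k / t) - ln (1 + real (card J)))" by simp
    then show ?thesis by (simp add: exp_diff add_pos_nonneg)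
  qed
  have "exp (psi w / 3) - 1 \<le> (exp (psi w) - 1) / 3"
    by (rule exp_divide_minus_one_le) simp
  also have "\<dots> \<le> exp (psi (v k / t)) / (1 + real (card J)) / 3"
    using shift by (rule divide_right_mono) simp
  also have "\<dots> \<le> (\<Sum>j\<in>J. Psi_fun psi (v j / t) + 1) / (1 + real (card J)) / 3"
    using member_le_sum[OF k _ fin, of "\<lambda>j. Psi_fun psi (v j / t) + 1"] nn v t
    by (intro divide_right_mono) (auto simp: Psi_fun_def add_increasing)
  finally show ?thesis unfolding w_def by (simp add: field_simps)
qed

lemma exp_psi_max_le:
  fixes psi :: "real \<Rightarrow> real" and v :: "'i \<Rightarrow> real"
  assumes cv: "convex_on {0..} psi" and p0: "psi 0 = 0" and nn: "\<forall>x\<ge>0. psi x \<ge> 0"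
    and s: "s > 0" and fin: "finite J" and k: "k \<in> J" and v: "\<And>j. j \<in> J \<Longrightarrow> v j \<ge> 0"
  shows "exp (psi (v k / s) / 3) - 1
          \<le> (1 / real (card J)) * (\<Sum>j\<in>J. Psi_fun psi (v j / (s / real (card J))))"
proof -
  have n: "real (card J) \<ge> 1" using fin k by (auto simp: Suc_le_eq card_gt_0_iff)
  have "exp (psi (v k / s) / 3) - 1 \<le> (exp (psi (v k / s)) - 1) / 3"
    by (rule exp_divide_minus_one_le) simp
  also have "\<dots> \<le> Psi_fun psi (v k / s)" using nn v k s by (simp add: Psi_fun_def)
  also have "\<dots> = Psi_fun psi ((v k / (s / real (card J))) / real (card J))" using n by simp
  also have "\<dots> \<le> Psi_fun psi (v k / (s / real (card J))) / real (card J)"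
    by (rule Psi_fun_divide_le[OF cv p0]) (use v k s n in auto)
  also have "\<dots> \<le> (\<Sum>j\<in>J. Psi_fun psi (v j / (s / real (card J)))) / real (card J)"
    using member_le_sum[OF k _ fin, of "\<lambda>j. Psi_fun psi (v j / (s / real (card J)))"] nn v s n
    by (intro divide_right_mono) (auto simp: Psi_fun_def)
  finally show ?thesis by simp
qed

lemma (in prob_space) orlicz_norm_shifted_max_le:
  fixes psi :: "real \<Rightarrow> real" and Z :: "'i \<Rightarrow> 'a \<Rightarrow> real"
  assumes cv: "convex_on {0..} psi" and mono: "mono_on {0..} psi"
    and p0: "psi 0 = 0" and nn: "\<forall>x\<ge>0. psi x \<ge> 0"
    and fin: "finite J" and ne: "J \<noteq> {}" and Z: "\<And>j. j \<in> J \<Longrightarrow> Z j \<in> borel_measurable M"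
    and norm: "\<And>j. j \<in> J \<Longrightarrow> orlicz_norm M (Psi_fun psi) (Z j) \<le> ereal t"
    and t: "t > 0" and u: "u \<ge> 0" "psi u = ln (1 + real (card J))"
  shows "orlicz_norm M (Psi_L psi (sqrt 6)) (\<lambda>x. max 0 ((MAX j\<in>J. \<bar>Z j x\<bar>) - t * u))
    \<le> ereal (sqrt 6 * t)"
proof (rule orlicz_norm_le)
  let ?W = "\<lambda>x. max 0 ((MAX j\<in>J. \<bar>Z j x\<bar>) - t * u)"
  have "(\<integral>\<^sup>+ x. ennreal (Psi_L psi (sqrt 6) (\<bar>?W x\<bar> / (sqrt 6 * t))) \<partial>M)
      \<le> ennreal ((1 / (3 * (real (card J) + 1))) * (real (card J) * (1 + 1)))"
  proof (rule nn_integral_le_of_sum_bound[OF fin])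
    fix x
    obtain k where "k \<in> J" "(MAX j\<in>J. \<bar>Z j x\<bar>) = \<bar>Z k x\<bar>"
      using Max_image_attained[OF fin ne] .
    then show "Psi_L psi (sqrt 6) (\<bar>?W x\<bar> / (sqrt 6 * t))
        \<le> (1 / (3 * (real (card J) + 1))) * (\<Sum>j\<in>J. Psi_fun psi (\<bar>Z j x\<bar> / t) + 1)"
      using exp_psi_shifted_max_le[OF cv p0 nn t u fin, of k "\<lambda>j. \<bar>Z j x\<bar>"] by (simp add: Psi_L_sqrt6)
  next
    fix j assume "j \<in> J"
    then show "(\<lambda>x. ennreal (Psi_fun psi (\<bar>Z j x\<bar> / t))) \<in> borel_measurable M"
      and "(\<integral>\<^sup>+ x. ennreal (Psi_fun psi (\<bar>Z j x\<bar> / t)) \<partial>M) \<le> 1"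
      using t borel_measurable_orlicz_integrand[OF mono_on_Psi_fun[OF mono] Z]
        nn_integral_orlicz_le[OF mono_on_Psi_fun[OF mono] continuous_on_Psi_fun[OF cv] Z norm t]
      by auto
  qed (use t nn in \<open>auto simp: Psi_fun_def\<close>)
  also have "\<dots> \<le> 1" by (simp add: field_simps)
  finally show "(\<integral>\<^sup>+ x. ennreal (Psi_L psi (sqrt 6) (\<bar>?W x\<bar> / (sqrt 6 * t))) \<partial>M) \<le> 1" .
qed (use t in simp)

lemma (in prob_space) orlicz_norm_max_le_zero:
  fixes psi :: "real \<Rightarrow> real" and Z :: "'i \<Rightarrow> 'a \<Rightarrow> real"
  assumes cv: "convex_on {0..} psi" and mono: "mono_on {0..} psi"
    and p0: "psi 0 = 0" and nn: "\<forall>x\<ge>0. psi x \<ge> 0"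
    and fin: "finite J" and ne: "J \<noteq> {}" and Z: "\<And>j. j \<in> J \<Longrightarrow> Z j \<in> borel_measurable M"
    and norm: "\<And>j. j \<in> J \<Longrightarrow> orlicz_norm M (Psi_fun psi) (Z j) \<le> 0"
  shows "orlicz_norm M (Psi_L psi (sqrt 6)) (\<lambda>x. max 0 (MAX j\<in>J. \<bar>Z j x\<bar>)) \<le> 0"
proof (rule ereal_le_epsilon2)
  let ?W = "\<lambda>x. max 0 (MAX j\<in>J. \<bar>Z j x\<bar>)"
  fix e :: real assume e: "e > 0"
  define s where "s = e / sqrt 6"
  have s: "s > 0" "s / real (card J) > 0" using e fin ne by (auto simp: s_def card_gt_0_iff)
  have "orlicz_norm M (Psi_L psi (sqrt 6)) ?W \<le> ereal (sqrt 6 * s)"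
  proof (rule orlicz_norm_le)
    have "(\<integral>\<^sup>+ x. ennreal (Psi_L psi (sqrt 6) (\<bar>?W x\<bar> / (sqrt 6 * s))) \<partial>M)
        \<le> ennreal ((1 / real (card J)) * (real (card J) * (1 + 0)))"
    proof (rule nn_integral_le_of_sum_bound[OF fin])
      fix x
      obtain k where "k \<in> J" "(MAX j\<in>J. \<bar>Z j x\<bar>) = \<bar>Z k x\<bar>"
        using Max_image_attained[OF fin ne] .
      then show "Psi_L psi (sqrt 6) (\<bar>?W x\<bar> / (sqrt 6 * s))
          \<le> (1 / real (card J)) * (\<Sum>j\<in>J. Psi_fun psi (\<bar>Z j x\<bar> / (s / real (card J))) + 0)"
        using exp_psi_max_le[OF cv p0 nn s(1) fin, of k "\<lambda>j. \<bar>Z j x\<bar>"] by (simp add: Psi_L_sqrt6)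
    next
      fix j assume j: "j \<in> J"
      show "(\<lambda>x. ennreal (Psi_fun psi (\<bar>Z j x\<bar> / (s / real (card J))))) \<in> borel_measurable M"
        using j s by (intro borel_measurable_orlicz_integrand[OF mono_on_Psi_fun[OF mono] Z]) auto
      have "orlicz_norm M (Psi_fun psi) (Z j) < ereal (s / real (card J))"
        using norm[OF j] s by (simp add: order.strict_trans1 zero_ereal_def)
      then show "(\<integral>\<^sup>+ x. ennreal (Psi_fun psi (\<bar>Z j x\<bar> / (s / real (card J)))) \<partial>M) \<le> 1"
        by (rule nn_integral_orlicz_le_of_less[OF mono_on_Psi_fun[OF mono]])
    qed (use s nn in \<open>auto simp: Psi_fun_def\<close>)
    also have "\<dots> \<le> 1" using fin ne by simp
    finally show "(\<integral>\<^sup>+ x. ennreal (Psi_L psi (sqrt 6) (\<bar>?W x\<bar> / (sqrt 6 * s))) \<partial>M) \<le> 1" .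
  qed (use s in simp)
  then show "orlicz_norm M (Psi_L psi (sqrt 6)) ?W \<le> 0 + ereal e"
    by (simp add: s_def)
qed

theorem lemma20:
  fixes M :: "'a measure" and psi :: "real \<Rightarrow> real" and Z :: "nat \<Rightarrow> 'a \<Rightarrow> real"
    and m :: nat and \<tau> :: ereal
  assumes "prob_space M"
    and "convex_on {0..} psi"
    and "mono_on {0..} psi"
    and "\<forall>x\<ge>0. psi x \<ge> 0"
    and "psi 0 = 0"
    and "\<exists>x\<ge>0. psi x \<noteq> 0"
    and "m \<ge> 1"
    and "\<forall>j\<in>{1..m}. Z j \<in> borel_measurable M"
    and "\<tau> = (MAX j\<in>{1..m}. orlicz_norm M (Psi_fun psi) (Z j))"
    and "\<tau> < \<infinity>"
  shows "orlicz_norm M (Psi_L psi (sqrt 6))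
           (\<lambda>x. max 0 ((MAX j\<in>{1..m}. \<bar>Z j x\<bar>) - real_of_ereal \<tau> * Psi_inv psi (real m)))
         \<le> ereal (sqrt 6) * \<tau>"
proof -
  let ?J = "{1..m}"
  have J: "finite ?J" "?J \<noteq> {}" using assms(7) by auto
  have norm: "orlicz_norm M (Psi_fun psi) (Z j) \<le> \<tau>" if "j \<in> ?J" for j
    using that unfolding assms(9) by (intro Max_ge) auto
  have "\<tau> \<ge> 0"
    using norm[of 1] orlicz_norm_nonneg[of M "Psi_fun psi" "Z 1"] assms(7) by (auto intro: order.trans)
  then obtain t where t: "\<tau> = ereal t" "t \<ge> 0" using assms(10) by (cases \<tau>) auto
  define u where "u = Psi_inv psi (real m)"
  have u: "u \<ge> 0" "psi u = ln (1 + real (card ?J))"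
    using Psi_inv_spec[OF assms(2,5,4,6), of "real m"] assms(7) unfolding u_def by auto
  show ?thesis
  proof (cases "t = 0")
    case True
    have "orlicz_norm M (Psi_L psi (sqrt 6)) (\<lambda>x. max 0 (MAX j\<in>?J. \<bar>Z j x\<bar>)) \<le> 0"
      using norm t True assms(8)
      by (intro prob_space.orlicz_norm_max_le_zero[OF assms(1-3,5,4) J]) (auto simp: zero_ereal_def)
    then show ?thesis using t True by (simp add: zero_ereal_def)
  next
    case False
    have "orlicz_norm M (Psi_L psi (sqrt 6)) (\<lambda>x. max 0 ((MAX j\<in>?J. \<bar>Z j x\<bar>) - t * u))
        \<le> ereal (sqrt 6 * t)"
      using norm t False assms(8)
      by (intro prob_space.orlicz_norm_shifted_max_le[OF assms(1-3,5,4) J _ _ _ u]) auto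
    then show ?thesis using t by (simp add: u_def)
  qed
qed

end
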